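(* Let $\Omega\subseteq\mathbb{R}^n$ be a bounded open set with Lipschitz boundary, $\varepsilon>0$, $g\in C^{0,1}_{\mathrm{loc}}(\mathbb{R}^n)\cap L^\infty(\mathbb{R}^n)$, $f\in L^\infty(\Omega)$, and let $v_\varepsilon\in H^s_g(\Omega)\cap L^p(\Omega)$ be a weak solution of $(-\Delta)^sv_\varepsilon+\varepsilon^{-2s}W'(v_\varepsilon)=f$ in $\Omega$. Then $v_\varepsilon\in L^\infty(\mathbb{R}^n)$.
   Context: $n\ge2$, $s\in(0,1/2)$. $W$ satisfies: $W\in C^2(\mathbb{R};[0,\infty))$; $\{W=0\}=\{\pm1\}$, $W''(\pm1)>0$; there exist $p\in(1,\infty)$ and $c_W>0$ with $c_W^{-1}(|t|^{p-1}-1)\le|W'(t)|\le c_W(|t|^{p-1}+1)$ for all $t$ ($p$ is this exponent). $\gamma_{n,s}:=s2^{2s}\pi^{-n/2}\Gamma(\frac{n+2s}{2})/\Gamma(1-s)$; $\mathcal{E}(v,\Omega):=\frac{\gamma_{n,s}}{4}\iint_{\Omega\times\Omega}\frac{|v(x)-v(y)|^2}{|x-y|^{n+2s}}+\frac{\gamma_{n,s}}{2}\iint_{\Omega\times\Omega^c}\frac{|v(x)-v(y)|^2}{|x-y|^{n+2s}}$; $\widehat H^s(\Omega)=\{v\in L^2_{\mathrm{loc}}(\mathbb{R}^n):\mathcal{E}(v,\Omega)<\infty\}$; $H^s_{00}(\Omega)=\{v\in H^s(\mathbb{R}^n):v=0$ a.e. outside $\Omega\}$; $H^s_g(\Omega)=\{v\in\widehat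 H^s(\Omega):v=g$ a.e. in $\mathbb{R}^n\setminus\Omega\}$. $\langle(-\Delta)^sv,\varphi\rangle_\Omega=\frac{\gamma_{n,s}}{2}\iint_{\Omega\times\Omega}\frac{(v(x)-v(y))(\varphi(x)-\varphi(y))}{|x-y|^{n+2s}}+\gamma_{n,s}\iint_{\Omega\times\Omega^c}\frac{(v(x)-v(y))(\varphi(x)-\varphi(y))}{|x-y|^{n+2s}}$. Weak solution means $v\in\widehat H^s(\Omega)\cap L^p(\Omega)$ and $\langle(-\Delta)^sv,\varphi\rangle_\Omega+\varepsilon^{-2s}\int_\Omega W'(v)\varphi=\int_\Omega f\varphi$ for all $\varphi\in H^s_{00}(\Omega)\cap L^p(\Omega)$. *)

theory Defs
  imports "HOL-Analysis.Analysis"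
begin

text \<open>Ambient space: R^n is rendered as an abstract euclidean_space 'a with n = DIM('a).\<close>

definition gamma_ns :: "nat \<Rightarrow> real \<Rightarrow> real" where
  "gamma_ns n s = s * 2 powr (2 * s) * pi powr (- real n / 2) * Gamma ((real n + 2 * s) / 2) / Gamma (1 - s)"

definition frac_kernel :: "real \<Rightarrow> 'a::euclidean_space \<Rightarrow> 'a \<Rightarrow> real" where
  "frac_kernel s x y = 1 / (norm (x - y) powr (real DIM('a) + 2 * s))"

definition frac_energy :: "real \<Rightarrow> 'a::euclidean_space set \<Rightarrow> ('a \<Rightarrow> real) \<Rightarrow> ennreal" where
  "frac_energy s \<Omega> v =
     ennreal (gamma_ns DIM('a) s / 4) *
       (\<integral>\<^sup>+ z. indicator (\<Omega> \<times> \<Omega>) z * ennreal ((v (fst z) - v (snd z))^2 * frac_kernel s (fst z) (snd z)) \<partial>(lebesgue \<Otimes>\<^sub>M lebesgue))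
   + ennreal (gamma_ns DIM('a) s / 2) *
       (\<integral>\<^sup>+ z. indicator (\<Omega> \<times> (- \<Omega>)) z * ennreal ((v (fst z) - v (snd z))^2 * frac_kernel s (fst z) (snd z)) \<partial>(lebesgue \<Otimes>\<^sub>M lebesgue))"

definition L2_loc :: "('a::euclidean_space \<Rightarrow> real) set" where
  "L2_loc = {v. v \<in> borel_measurable lebesgue \<and>
     (\<forall>K. compact K \<longrightarrow> (\<integral>\<^sup>+ x. indicator K x * ennreal ((v x)^2) \<partial>lebesgue) < \<infinity>)}"

definition hatH :: "real \<Rightarrow> 'a::euclidean_space set \<Rightarrow> ('a \<Rightarrow> real) set" where
  "hatH s \<Omega> = {v. v \<in> L2_loc \<and> frac_energy s \<Omega> v < \<infinity>}"

definition Hs_g :: "real \<Rightarrow> 'a::euclidean_space set \<Rightarrow> ('a \<Rightarrow> real) \<Rightarrow> ('a \<Rightarrow> real) set" where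
  "Hs_g s \<Omega> g = {v. v \<in> hatH s \<Omega> \<and> (AE x in lebesgue. x \<notin> \<Omega> \<longrightarrow> v x = g x)}"

definition Hs_full :: "real \<Rightarrow> ('a::euclidean_space \<Rightarrow> real) set" where
  "Hs_full s = {v. v \<in> borel_measurable lebesgue \<and>
     (\<integral>\<^sup>+ x. ennreal ((v x)^2) \<partial>lebesgue) < \<infinity> \<and>
     (\<integral>\<^sup>+ z. ennreal ((v (fst z) - v (snd z))^2 * frac_kernel s (fst z) (snd z)) \<partial>(lebesgue \<Otimes>\<^sub>M lebesgue)) < \<infinity>}"

definition Hs_00 :: "real \<Rightarrow> 'a::euclidean_space set \<Rightarrow> ('a \<Rightarrow> real) set" where
  "Hs_00 s \<Omega> = {v. v \<in> Hs_full s \<and> (AE x in lebesgue. x \<notin> \<Omega> \<longrightarrow> v x = 0)}"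

definition Lp_on :: "real \<Rightarrow> 'a::euclidean_space set \<Rightarrow> ('a \<Rightarrow> real) set" where
  "Lp_on p \<Omega> = {v. set_borel_measurable lebesgue \<Omega> v \<and>
     (\<integral>\<^sup>+ x. indicator \<Omega> x * ennreal (\<bar>v x\<bar> powr p) \<partial>lebesgue) < \<infinity>}"

definition Linfty_on :: "'a::euclidean_space set \<Rightarrow> ('a \<Rightarrow> real) set" where
  "Linfty_on \<Omega> = {v. set_borel_measurable lebesgue \<Omega> v \<and>
     (\<exists>C. AE x in lebesgue. x \<in> \<Omega> \<longrightarrow> \<bar>v x\<bar> \<le> C)}"

definition frac_form :: "real \<Rightarrow> 'a::euclidean_space set \<Rightarrow> ('a \<Rightarrow> real) \<Rightarrow> ('a \<Rightarrow> real) \<Rightarrow> real" where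
  "frac_form s \<Omega> v \<phi> =
     gamma_ns DIM('a) s / 2 *
       (\<integral> z. indicator (\<Omega> \<times> \<Omega>) z * ((v (fst z) - v (snd z)) * (\<phi> (fst z) - \<phi> (snd z)) * frac_kernel s (fst z) (snd z)) \<partial>(lebesgue \<Otimes>\<^sub>M lebesgue))
   + gamma_ns DIM('a) s *
       (\<integral> z. indicator (\<Omega> \<times> (- \<Omega>)) z * ((v (fst z) - v (snd z)) * (\<phi> (fst z) - \<phi> (snd z)) * frac_kernel s (fst z) (snd z)) \<partial>(lebesgue \<Otimes>\<^sub>M lebesgue))"

definition weak_solution ::
  "real \<Rightarrow> real \<Rightarrow> real \<Rightarrow> (real \<Rightarrow> real) \<Rightarrow> ('a::euclidean_space \<Rightarrow> real) \<Rightarrow> 'a set \<Rightarrow> ('a \<Rightarrow> real) \<Rightarrow> bool" where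
  "weak_solution s p \<epsilon> W' f \<Omega> v \<longleftrightarrow>
     v \<in> hatH s \<Omega> \<and> v \<in> Lp_on p \<Omega> \<and>
     (\<forall>\<phi> \<in> Hs_00 s \<Omega> \<inter> Lp_on p \<Omega>.
        frac_form s \<Omega> v \<phi> + \<epsilon> powr (- 2 * s) * (\<integral> x. indicator \<Omega> x * (W' (v x) * \<phi> x) \<partial>lebesgue)
        = (\<integral> x. indicator \<Omega> x * (f x * \<phi> x) \<partial>lebesgue))"

text \<open>Lipschitz boundary: near each boundary point, after choosing a unit direction nu,
  Omega is the strict epigraph (in direction nu) of a Lipschitz function of the
  coordinates orthogonal to nu.\<close>
definition lipschitz_boundary :: "'a::euclidean_space set \<Rightarrow> bool" where
  "lipschitz_boundary \<Omega> \<longleftrightarrow>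
     (\<forall>x0 \<in> frontier \<Omega>. \<exists>r>0. \<exists>\<nu>::'a. \<exists>\<gamma>::'a \<Rightarrow> real. \<exists>L.
        norm \<nu> = 1 \<and> L-lipschitz_on UNIV \<gamma> \<and>
        (\<forall>y. \<gamma> y = \<gamma> (y - (y \<bullet> \<nu>) *\<^sub>R \<nu>)) \<and>
        \<Omega> \<inter> ball x0 r = {y \<in> ball x0 r. y \<bullet> \<nu> > \<gamma> y})"

definition loc_lipschitz :: "('a::euclidean_space \<Rightarrow> real) \<Rightarrow> bool" where
  "loc_lipschitz g \<longleftrightarrow> (\<forall>K. compact K \<longrightarrow> (\<exists>L. L-lipschitz_on K g))"

end

theory Submission
  imports Defs
begin

text \<open>Test the equation with \<open>w = T\<^sub>M \<circ> v\<close>, where \<open>T\<^sub>M t\<close> is the excess of \<open>t\<close> beyond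
  \<open>[-M, M]\<close> clipped to \<open>[-1, 1]\<close>. Since \<open>W \<ge> 0\<close> and \<open>|W'|\<close> grows like \<open>|t| powr (p - 1)\<close>, the
  derivative \<open>W' t\<close> has the sign of \<open>t\<close> and modulus at least \<open>K\<close> once \<open>|t| \<ge> M\<close>; taking \<open>M\<close>
  also above the bound of the exterior datum \<open>g\<close> makes \<open>w\<close> vanish outside \<open>\<Omega>\<close>. As \<open>T\<^sub>M\<close> is a
  monotone contraction, \<open>w\<close> is an admissible test function and the nonlocal form
  \<open>frac_form s \<Omega> v w\<close> is nonnegative, whence
  \<open>\<epsilon> powr (-2s) * K * \<integral>\<^sub>\<Omega>|w| \<le> \<epsilon> powr (-2s) * \<integral>\<^sub>\<Omega> W'(v) w \<le> \<integral>\<^sub>\<Omega> f w \<le> \<parallel>f\<parallel>\<^sub>\<infinity> * \<integral>\<^sub>\<Omega>|w|\<close>.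
  For \<open>K > \<epsilon> powr (2s) * \<parallel>f\<parallel>\<^sub>\<infinity>\<close> this forces \<open>w = 0\<close>, that is \<open>|v| \<le> M\<close> in \<open>\<Omega>\<close>.\<close>

interpretation lebesgue: sigma_finite_measure "lebesgue :: 'a::euclidean_space measure"
proof
  show "\<exists>A. countable A \<and> A \<subseteq> sets (lebesgue :: 'a measure) \<and> \<Union> A = space lebesgue
      \<and> (\<forall>a\<in>A. emeasure lebesgue a \<noteq> \<infinity>)"
  proof (intro exI conjI)
    show "countable (range (\<lambda>n::nat. cball (0::'a) (real n)))" by simp
    show "range (\<lambda>n::nat. cball (0::'a) (real n)) \<subseteq> sets lebesgue" by auto
    show "\<Union> (range (\<lambda>n::nat. cball (0::'a) (real n))) = space lebesgue"
      by (auto simp: dist_norm) (meson real_arch_simple)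
    show "\<forall>a\<in>range (\<lambda>n::nat. cball (0::'a) (real n)). emeasure lebesgue a \<noteq> \<infinity>"
      using fmeasurableD2[OF lmeasurable_cball] by auto
  qed
qed

interpretation lebesgue_pair: pair_sigma_finite "lebesgue :: 'a::euclidean_space measure" lebesgue ..

lemma nn_integral_lebesgue_pair_swap:
  fixes f :: "'a::euclidean_space \<times> 'a \<Rightarrow> ennreal"
  assumes [measurable]: "f \<in> borel_measurable (lebesgue \<Otimes>\<^sub>M lebesgue)"
  shows "(\<integral>\<^sup>+ z. f (snd z, fst z) \<partial>(lebesgue \<Otimes>\<^sub>M lebesgue)) = integral\<^sup>N (lebesgue \<Otimes>\<^sub>M lebesgue) f"
  by (subst (2) lebesgue_pair.distr_pair_swap) (auto simp: nn_integral_distr case_prod_beta intro!: nn_integral_cong)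

lemma measurable_fst_lebesgue_borel [measurable]:
  "(fst :: 'a::euclidean_space \<times> 'a \<Rightarrow> 'a) \<in> lebesgue \<Otimes>\<^sub>M lebesgue \<rightarrow>\<^sub>M borel"
  using measurable_compose[OF measurable_fst id_borel_measurable_lebesgue] by (simp add: id_def)

lemma measurable_snd_lebesgue_borel [measurable]:
  "(snd :: 'a::euclidean_space \<times> 'a \<Rightarrow> 'a) \<in> lebesgue \<Otimes>\<^sub>M lebesgue \<rightarrow>\<^sub>M borel"
  using measurable_compose[OF measurable_snd id_borel_measurable_lebesgue] by (simp add: id_def)

lemma frac_kernel_measurable [measurable]:
  "(\<lambda>z. frac_kernel s (fst z) (snd z)) \<in> borel_measurable (lebesgue \<Otimes>\<^sub>M (lebesgue :: 'a::euclidean_space measure))"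
  unfolding frac_kernel_def by measurable

lemma frac_kernel_nonneg: "0 \<le> frac_kernel s x y"
  unfolding frac_kernel_def by simp

lemma frac_kernel_commute: "frac_kernel s x y = frac_kernel s y x"
  unfolding frac_kernel_def by (simp add: norm_minus_commute)

lemma gamma_ns_pos: "0 < s \<Longrightarrow> s < 1 \<Longrightarrow> 0 < gamma_ns n s"
  unfolding gamma_ns_def by (intro divide_pos_pos mult_pos_pos Gamma_real_pos) auto

lemma frac_energy_finite_parts:
  fixes v :: "'a::euclidean_space \<Rightarrow> real"
  assumes "0 < s" "s < 1" and "frac_energy s \<Omega> v < \<infinity>"
  shows "(\<integral>\<^sup>+ z. indicator (\<Omega> \<times> \<Omega>) z * ennreal ((v (fst z) - v (snd z))\<^sup>2 * frac_kernel s (fst z) (snd z))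
            \<partial>(lebesgue \<Otimes>\<^sub>M lebesgue)) < \<infinity>"
    and "(\<integral>\<^sup>+ z. indicator (\<Omega> \<times> - \<Omega>) z * ennreal ((v (fst z) - v (snd z))\<^sup>2 * frac_kernel s (fst z) (snd z))
            \<partial>(lebesgue \<Otimes>\<^sub>M lebesgue)) < \<infinity>"
  using assms(3) gamma_ns_pos[OF assms(1,2), of "DIM('a)"] unfolding frac_energy_def
  by (auto simp: ennreal_eq_0_iff ennreal_add_less_top ennreal_mult_less_top less_top[symmetric])

text \<open>Interactions between two points outside \<open>\<Omega>\<close> do not enter the energy; they vanish for
  a contraction of \<open>v\<close> that is zero off \<open>\<Omega>\<close>, and the \<open>(-\<Omega>) \<times> \<Omega>\<close> part is the mirror image
  of the \<open>\<Omega> \<times> (-\<Omega>)\<close> part.\<close>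
lemma gagliardo_finite_of_contraction:
  fixes v w :: "'a::euclidean_space \<Rightarrow> real"
  assumes s: "0 < s" "s < 1"
    and \<Omega> [measurable]: "\<Omega> \<in> sets lebesgue"
    and [measurable]: "v \<in> borel_measurable lebesgue" "w \<in> borel_measurable lebesgue"
    and energy: "frac_energy s \<Omega> v < \<infinity>"
    and w_outside: "AE x in lebesgue. x \<notin> \<Omega> \<longrightarrow> w x = 0"
    and contraction: "\<And>x y. \<bar>w x - w y\<bar> \<le> \<bar>v x - v y\<bar>"
  shows "(\<integral>\<^sup>+ z. ennreal ((w (fst z) - w (snd z))\<^sup>2 * frac_kernel s (fst z) (snd z)) \<partial>(lebesgue \<Otimes>\<^sub>M lebesgue)) < \<infinity>"
proof -
  define X where "X z = ennreal ((v (fst z) - v (snd z))\<^sup>2 * frac_kernel s (fst z) (snd z))" for z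
  have [measurable]: "X \<in> borel_measurable (lebesgue \<Otimes>\<^sub>M lebesgue)"
    unfolding X_def by measurable
  have [measurable]: "- \<Omega> \<in> sets lebesgue"
    using sets.compl_sets[OF \<Omega>] by (simp add: Compl_eq_Diff_UNIV)
  have X_swap: "X (snd z, fst z) = X z" for z
    unfolding X_def by (simp add: frac_kernel_commute power2_commute)
  have w_outside_pair: "AE z in lebesgue \<Otimes>\<^sub>M lebesgue.
      (fst z \<notin> \<Omega> \<longrightarrow> w (fst z) = 0) \<and> (snd z \<notin> \<Omega> \<longrightarrow> w (snd z) = 0)"
  proof (rule lebesgue_pair.AE_pair_measure)
    show "AE x in lebesgue. AE y in lebesgue.
        (fst (x, y) \<notin> \<Omega> \<longrightarrow> w (fst (x, y)) = 0) \<and> (snd (x, y) \<notin> \<Omega> \<longrightarrow> w (snd (x, y)) = 0)"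
      using w_outside by eventually_elim (use w_outside in auto)
  qed measurable
  have "(\<integral>\<^sup>+ z. ennreal ((w (fst z) - w (snd z))\<^sup>2 * frac_kernel s (fst z) (snd z)) \<partial>(lebesgue \<Otimes>\<^sub>M lebesgue))
      \<le> (\<integral>\<^sup>+ z. indicator (\<Omega> \<times> \<Omega>) z * X z + indicator (\<Omega> \<times> - \<Omega>) z * X z
            + indicator ((- \<Omega>) \<times> \<Omega>) z * X z \<partial>(lebesgue \<Otimes>\<^sub>M lebesgue))"
    using w_outside_pair
  proof (intro nn_integral_mono_AE, eventually_elim)
    case (elim z)
    have "(w (fst z) - w (snd z))\<^sup>2 \<le> (v (fst z) - v (snd z))\<^sup>2"
      using contraction abs_le_square_iff by blast
    then have "ennreal ((w (fst z) - w (snd z))\<^sup>2 * frac_kernel s (fst z) (snd z)) \<le> X z"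
      unfolding X_def by (intro ennreal_leI mult_right_mono frac_kernel_nonneg)
    with elim show ?case
      by (cases z) (auto simp: indicator_def)
  qed
  also have "\<dots> = (\<integral>\<^sup>+ z. indicator (\<Omega> \<times> \<Omega>) z * X z \<partial>(lebesgue \<Otimes>\<^sub>M lebesgue))
      + (\<integral>\<^sup>+ z. indicator (\<Omega> \<times> - \<Omega>) z * X z \<partial>(lebesgue \<Otimes>\<^sub>M lebesgue))
      + (\<integral>\<^sup>+ z. indicator ((- \<Omega>) \<times> \<Omega>) z * X z \<partial>(lebesgue \<Otimes>\<^sub>M lebesgue))"
    by (intro nn_integral_add[THEN trans] arg_cong2[where f="(+)"] refl) measurable
  also have "(\<integral>\<^sup>+ z. indicator ((- \<Omega>) \<times> \<Omega>) z * X z \<partial>(lebesgue \<Otimes>\<^sub>M lebesgue))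
      = (\<integral>\<^sup>+ z. indicator (\<Omega> \<times> - \<Omega>) z * X z \<partial>(lebesgue \<Otimes>\<^sub>M lebesgue))"
    by (subst nn_integral_lebesgue_pair_swap[symmetric])
      (auto simp: X_swap indicator_def intro!: nn_integral_cong)
  also have "(\<integral>\<^sup>+ z. indicator (\<Omega> \<times> \<Omega>) z * X z \<partial>(lebesgue \<Otimes>\<^sub>M lebesgue))
      + (\<integral>\<^sup>+ z. indicator (\<Omega> \<times> - \<Omega>) z * X z \<partial>(lebesgue \<Otimes>\<^sub>M lebesgue))
      + (\<integral>\<^sup>+ z. indicator (\<Omega> \<times> - \<Omega>) z * X z \<partial>(lebesgue \<Otimes>\<^sub>M lebesgue)) < \<infinity>"
    using frac_energy_finite_parts[OF s energy] by (simp add: X_def ennreal_add_less_top)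
  finally show ?thesis .
qed

lemma Hs_00_of_contraction:
  fixes v w :: "'a::euclidean_space \<Rightarrow> real"
  assumes s: "0 < s" "s < 1"
    and \<Omega>: "\<Omega> \<in> sets lebesgue" "emeasure lebesgue \<Omega> < \<infinity>"
    and v: "v \<in> borel_measurable lebesgue" "frac_energy s \<Omega> v < \<infinity>"
    and w: "w \<in> borel_measurable lebesgue" "\<And>x. \<bar>w x\<bar> \<le> C"
    and w_outside: "AE x in lebesgue. x \<notin> \<Omega> \<longrightarrow> w x = 0"
    and contraction: "\<And>x y. \<bar>w x - w y\<bar> \<le> \<bar>v x - v y\<bar>"
  shows "w \<in> Hs_00 s \<Omega>"
  unfolding Hs_00_def Hs_full_def
proof (intro CollectI conjI w(1) w_outside gagliardo_finite_of_contraction[OF s \<Omega>(1) v(1) w(1) v(2) w_outside contraction])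
  have "(\<integral>\<^sup>+ x. ennreal ((w x)\<^sup>2) \<partial>lebesgue) \<le> (\<integral>\<^sup>+ x. ennreal (C\<^sup>2) * indicator \<Omega> x \<partial>lebesgue)"
    using w_outside
  proof (intro nn_integral_mono_AE, eventually_elim)
    case (elim x)
    have "(w x)\<^sup>2 \<le> C\<^sup>2"
      using w(2)[of x] abs_le_square_iff[of "w x" C] by simp
    with elim show ?case
      by (auto simp: indicator_def ennreal_leI)
  qed
  also have "\<dots> < \<infinity>"
    using \<Omega> by (simp add: nn_integral_cmult_indicator ennreal_mult_less_top)
  finally show "(\<integral>\<^sup>+ x. ennreal ((w x)\<^sup>2) \<partial>lebesgue) < \<infinity>" .
qed

lemma Lp_on_of_bounded:
  fixes w :: "'a::euclidean_space \<Rightarrow> real"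
  assumes \<Omega>: "\<Omega> \<in> sets lebesgue" "emeasure lebesgue \<Omega> < \<infinity>"
    and w: "w \<in> borel_measurable lebesgue" "\<And>x. \<bar>w x\<bar> \<le> C"
    and p: "0 \<le> p"
  shows "w \<in> Lp_on p \<Omega>"
  unfolding Lp_on_def
proof (intro CollectI conjI)
  show "set_borel_measurable lebesgue \<Omega> w"
    using \<Omega>(1) w(1) unfolding set_borel_measurable_def by measurable
  have "(\<integral>\<^sup>+ x. indicator \<Omega> x * ennreal (\<bar>w x\<bar> powr p) \<partial>lebesgue)
      \<le> (\<integral>\<^sup>+ x. ennreal (C powr p) * indicator \<Omega> x \<partial>lebesgue)"
  proof (intro nn_integral_mono)
    fix x
    have "\<bar>w x\<bar> powr p \<le> C powr p"
      using p w(2)[of x] by (intro powr_mono2) auto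
    then show "indicator \<Omega> x * ennreal (\<bar>w x\<bar> powr p) \<le> ennreal (C powr p) * indicator \<Omega> x"
      by (auto simp: indicator_def ennreal_leI)
  qed
  also have "\<dots> < \<infinity>"
    using \<Omega> by (simp add: nn_integral_cmult_indicator ennreal_mult_less_top)
  finally show "(\<integral>\<^sup>+ x. indicator \<Omega> x * ennreal (\<bar>w x\<bar> powr p) \<partial>lebesgue) < \<infinity>" .
qed

lemma integrable_indicator_bounded:
  fixes u :: "'a::euclidean_space \<Rightarrow> real"
  assumes \<Omega>: "\<Omega> \<in> sets lebesgue" "emeasure lebesgue \<Omega> < \<infinity>"
    and u: "(\<lambda>x. indicator \<Omega> x * u x) \<in> borel_measurable lebesgue"
    and bound: "AE x in lebesgue. x \<in> \<Omega> \<longrightarrow> \<bar>u x\<bar> \<le> C"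
  shows "integrable lebesgue (\<lambda>x. indicator \<Omega> x * u x)"
proof (rule Bochner_Integration.integrable_bound)
  show "integrable lebesgue (\<lambda>x. C * indicator \<Omega> x)"
    using \<Omega> by simp
  show "AE x in lebesgue. norm (indicator \<Omega> x * u x) \<le> norm (C * indicator \<Omega> x)"
    using bound by eventually_elim (auto simp: indicator_def)
qed (rule u)

lemma powr_le_powr_plus_1:
  fixes t p :: real
  assumes "0 \<le> t" "1 \<le> p"
  shows "t powr (p - 1) \<le> t powr p + 1"
proof (cases "t \<le> 1")
  case True
  then have "t powr (p - 1) \<le> 1"
    using assms powr_mono2[of "p - 1" t 1] by simp
  then show ?thesis
    using powr_ge_zero[of t p] by linarith
next
  case False
  then have "t powr (p - 1) \<le> t powr p"
    by (intro powr_mono) auto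
  then show ?thesis by simp
qed

lemma integrable_growth_mult_bounded:
  fixes v w :: "'a::euclidean_space \<Rightarrow> real" and h :: "real \<Rightarrow> real"
  assumes \<Omega>: "\<Omega> \<in> sets lebesgue" "emeasure lebesgue \<Omega> < \<infinity>"
    and p: "1 \<le> p" and v: "v \<in> borel_measurable lebesgue" "v \<in> Lp_on p \<Omega>"
    and h: "h \<in> borel_measurable borel" "\<And>t. \<bar>h t\<bar> \<le> c * (\<bar>t\<bar> powr (p - 1) + 1)"
    and w: "w \<in> borel_measurable lebesgue" "\<And>x. \<bar>w x\<bar> \<le> 1"
  shows "integrable lebesgue (\<lambda>x. indicator \<Omega> x * (h (v x) * w x))"
proof (rule Bochner_Integration.integrable_bound)
  have "integrable lebesgue (\<lambda>x. indicator \<Omega> x * \<bar>v x\<bar> powr p)"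
  proof (rule integrableI_nonneg)
    show "(\<lambda>x. indicator \<Omega> x * \<bar>v x\<bar> powr p) \<in> borel_measurable lebesgue"
      using \<Omega>(1) v(1) by measurable
    have "(\<integral>\<^sup>+ x. ennreal (indicator \<Omega> x * \<bar>v x\<bar> powr p) \<partial>lebesgue)
        = (\<integral>\<^sup>+ x. indicator \<Omega> x * ennreal (\<bar>v x\<bar> powr p) \<partial>lebesgue)"
      by (intro nn_integral_cong) (simp split: split_indicator)
    also have "\<dots> < \<infinity>"
      using v(2) by (simp add: Lp_on_def)
    finally show "(\<integral>\<^sup>+ x. ennreal (indicator \<Omega> x * \<bar>v x\<bar> powr p) \<partial>lebesgue) < \<infinity>" .
  qed simp
  then show "integrable lebesgue (\<lambda>x. \<bar>c\<bar> * (indicator \<Omega> x * \<bar>v x\<bar> powr p) + 2 * \<bar>c\<bar> * indicator \<Omega> x)"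
    using \<Omega> by (intro Bochner_Integration.integrable_add Bochner_Integration.integrable_mult_right) simp_all
  show "(\<lambda>x. indicator \<Omega> x * (h (v x) * w x)) \<in> borel_measurable lebesgue"
    using \<Omega>(1) v(1) h(1) w(1) by measurable
  show "AE x in lebesgue. norm (indicator \<Omega> x * (h (v x) * w x))
      \<le> norm (\<bar>c\<bar> * (indicator \<Omega> x * \<bar>v x\<bar> powr p) + 2 * \<bar>c\<bar> * indicator \<Omega> x)"
  proof (intro AE_I2)
    fix x
    have "\<bar>h (v x) * w x\<bar> \<le> \<bar>h (v x)\<bar>"
      using w(2)[of x] by (simp add: abs_mult mult_left_le)
    also have "\<dots> \<le> \<bar>c\<bar> * (\<bar>v x\<bar> powr (p - 1) + 1)"
      using h(2)[of "v x"] by (smt (verit) abs_ge_self mult_right_mono powr_ge_zero)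
    also have "\<dots> \<le> \<bar>c\<bar> * (\<bar>v x\<bar> powr p + 2)"
      using powr_le_powr_plus_1[OF abs_ge_zero p, of "v x"] by (intro mult_left_mono) auto
    finally show "norm (indicator \<Omega> x * (h (v x) * w x))
        \<le> norm (\<bar>c\<bar> * (indicator \<Omega> x * \<bar>v x\<bar> powr p) + 2 * \<bar>c\<bar> * indicator \<Omega> x)"
      by (auto simp: indicator_def algebra_simps)
  qed
qed

lemma frac_form_nonneg_of_monotone:
  fixes v w :: "'a::euclidean_space \<Rightarrow> real"
  assumes "0 < s" "s < 1" and mono: "\<And>x y. 0 \<le> (v x - v y) * (w x - w y)"
  shows "0 \<le> frac_form s \<Omega> v w"
proof -
  have integral_nonneg: "0 \<le> (\<integral> z. indicator A z * ((v (fst z) - v (snd z)) * (w (fst z) - w (snd z))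
      * frac_kernel s (fst z) (snd z)) \<partial>(lebesgue \<Otimes>\<^sub>M lebesgue))" for A
    by (intro integral_nonneg_AE AE_I2 mult_nonneg_nonneg mono frac_kernel_nonneg) simp
  show ?thesis
    unfolding frac_form_def
    using gamma_ns_pos[OF assms(1,2), of "DIM('a)"] integral_nonneg[of "\<Omega> \<times> \<Omega>"] integral_nonneg[of "\<Omega> \<times> - \<Omega>"]
    by simp
qed

lemma AE_eq_0_of_balance:
  fixes u h \<omega> :: "'b \<Rightarrow> real"
  assumes integrable: "integrable M u" "integrable M h" "integrable M \<omega>"
    and balance: "a + c * integral\<^sup>L M u = integral\<^sup>L M h" "0 \<le> a" "0 \<le> c"
    and "\<And>x. 0 \<le> \<omega> x" "\<And>x. K * \<omega> x \<le> u x" "AE x in M. h x \<le> F * \<omega> x"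
    and "F < c * K"
  shows "AE x in M. \<omega> x = 0"
proof -
  have "K * integral\<^sup>L M \<omega> = (\<integral>x. K * \<omega> x \<partial>M)"
    by simp
  also have "\<dots> \<le> integral\<^sup>L M u"
    using assms by (intro integral_mono) auto
  finally have "c * (K * integral\<^sup>L M \<omega>) \<le> c * integral\<^sup>L M u"
    using \<open>0 \<le> c\<close> by (rule mult_left_mono)
  also have "\<dots> \<le> integral\<^sup>L M h"
    using balance by linarith
  also have "\<dots> \<le> (\<integral>x. F * \<omega> x \<partial>M)"
    using assms by (intro integral_mono_AE) auto
  also have "\<dots> = F * integral\<^sup>L M \<omega>"
    by simp
  finally have "(c * K - F) * integral\<^sup>L M \<omega> \<le> 0"
    by (simp add: algebra_simps)
  moreover have "0 \<le> integral\<^sup>L M \<omega>"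
    using assms by (intro integral_nonneg_AE) auto
  ultimately have "integral\<^sup>L M \<omega> = 0"
    using \<open>F < c * K\<close> by (simp add: mult_le_0_iff)
  then show ?thesis
    using integral_nonneg_eq_0_iff_AE[OF integrable(3)] assms by auto
qed

text \<open>The clipping keeps the test function bounded, so it lies in \<open>Lp_on p \<Omega>\<close> and \<open>Hs_00 s \<Omega>\<close>
  without any integrability of \<open>v\<close> beyond its energy.\<close>
definition truncation :: "real \<Rightarrow> real \<Rightarrow> real" where
  "truncation M t = max (-1) (min 1 (max (t - M) 0 + min (t + M) 0))"

lemma truncation_measurable [measurable]: "truncation M \<in> borel_measurable borel"
  unfolding truncation_def by measurable

lemma mono_truncation: "0 \<le> M \<Longrightarrow> mono (truncation M)"
  unfolding truncation_def by (rule monoI) (auto simp: max_def min_def)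

lemma truncation_contraction: "0 \<le> M \<Longrightarrow> \<bar>truncation M a - truncation M b\<bar> \<le> \<bar>a - b\<bar>"
  unfolding truncation_def by (auto simp: max_def min_def abs_if)

lemma truncation_eq_0_iff: "0 \<le> M \<Longrightarrow> truncation M t = 0 \<longleftrightarrow> \<bar>t\<bar> \<le> M"
  unfolding truncation_def by (auto simp: max_def min_def abs_if split: if_splits)

lemma abs_truncation_le_1: "\<bar>truncation M t\<bar> \<le> 1"
  unfolding truncation_def by (auto simp: max_def min_def abs_if)

lemma truncation_coercive_product:
  assumes "0 \<le> M" "\<And>t. M \<le> t \<Longrightarrow> K \<le> h t" "\<And>t. t \<le> -M \<Longrightarrow> h t \<le> -K"
  shows "K * \<bar>truncation M t\<bar> \<le> h t * truncation M t"
proof -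
  consider "M < t" | "t < -M" | "\<bar>t\<bar> \<le> M"
    by linarith
  then show ?thesis
  proof cases
    case 1
    then have "0 \<le> truncation M t" "K \<le> h t"
      using assms unfolding truncation_def by (auto simp: max_def min_def)
    then show ?thesis
      by (simp add: mult_right_mono)
  next
    case 2
    then have "truncation M t \<le> 0" "h t \<le> -K"
      using assms unfolding truncation_def by (auto simp: max_def min_def)
    then show ?thesis
      using mult_right_mono_neg[of "h t" "-K" "truncation M t"] by simp
  next
    case 3
    then have "truncation M t = 0"
      using truncation_eq_0_iff[OF assms(1)] by blast
    then show ?thesis by simp
  qed
qed

lemma mono_product_nonneg:
  fixes f :: "real \<Rightarrow> real"
  assumes "mono f"
  shows "0 \<le> (a - b) * (f a - f b)"
proof (cases "a \<le> b")
  case True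
  then show ?thesis
    using monoD[OF assms True] by (intro mult_nonpos_nonpos) auto
next
  case False
  then show ?thesis
    using monoD[OF assms, of b a] by (intro mult_nonneg_nonneg) auto
qed

lemma continuous_nonzero_sign_at_top:
  fixes h :: "real \<Rightarrow> real"
  assumes cont: "continuous_on {R..} h" and nonzero: "\<And>t. R \<le> t \<Longrightarrow> h t \<noteq> 0"
    and "R \<le> a" "R \<le> b" "h a < 0"
  shows "h b < 0"
proof (rule ccontr)
  assume "\<not> h b < 0"
  then have "0 < h b"
    using nonzero[OF \<open>R \<le> b\<close>] by linarith
  have "\<exists>x. R \<le> x \<and> h x = 0"
  proof (cases "a \<le> b")
    case True
    have "continuous_on {a..b} h"
      using cont by (rule continuous_on_subset) (use \<open>R \<le> a\<close> in auto)
    then obtain x where "a \<le> x" "h x = 0"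
      using IVT'[of h a 0 b] True \<open>h a < 0\<close> \<open>0 < h b\<close> by auto
    then show ?thesis
      using \<open>R \<le> a\<close> by (intro exI[of _ x]) auto
  next
    case False
    have "continuous_on {b..a} h"
      using cont by (rule continuous_on_subset) (use \<open>R \<le> b\<close> in auto)
    then obtain x where "b \<le> x" "h x = 0"
      using IVT2'[of h a 0 b] False \<open>h a < 0\<close> \<open>0 < h b\<close> by auto
    then show ?thesis
      using \<open>R \<le> b\<close> by (intro exI[of _ x]) auto
  qed
  then show False
    using nonzero by blast
qed

text \<open>A function bounded below cannot keep a derivative \<open>\<le> -1\<close> on a half-line; by continuity
  a derivative of modulus \<open>\<ge> 1\<close> there is therefore positive.\<close>
lemma deriv_pos_at_top:
  fixes W W' :: "real \<Rightarrow> real"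
  assumes deriv: "\<And>t. (W has_real_derivative W' t) (at t)" and cont: "continuous_on UNIV W'"
    and bounded_below: "\<And>t. B \<le> W t" and large: "\<And>t. R \<le> t \<Longrightarrow> 1 \<le> \<bar>W' t\<bar>"
    and "R \<le> t"
  shows "0 < W' t"
proof (rule ccontr)
  assume "\<not> 0 < W' t"
  then have "W' t < 0"
    using large[OF \<open>R \<le> t\<close>] by auto
  then have "W' b < 0" if "R \<le> b" for b
    using continuous_nonzero_sign_at_top[of R W' t b] continuous_on_subset[OF cont] large \<open>R \<le> t\<close> that
    by fastforce
  then have slope: "W' b \<le> -1" if "R \<le> b" for b
    using large[OF that] that by fastforce
  define D where "D = W R - B + 1"
  have "0 < D"
    using bounded_below[of R] by (simp add: D_def)
  then obtain z where z: "R < z" "W (R + D) - W R = D * W' z"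
    using MVT2[of R "R + D" W W'] deriv by force
  have "D * W' z \<le> D * (-1)"
    using slope[of z] z(1) \<open>0 < D\<close> by (intro mult_left_mono) auto
  then have "W (R + D) < B"
    using z(2) by (simp add: D_def)
  then show False
    using bounded_below[of "R + D"] by simp
qed

lemma deriv_coercive_of_growth:
  fixes W W' :: "real \<Rightarrow> real"
  assumes deriv: "\<And>t. (W has_real_derivative W' t) (at t)" and cont: "continuous_on UNIV W'"
    and bounded_below: "\<And>t. B \<le> W t"
    and p: "1 < p" and c: "0 < c" and growth: "\<And>t. (\<bar>t\<bar> powr (p - 1) - 1) / c \<le> \<bar>W' t\<bar>"
  shows "\<exists>M\<ge>0. \<forall>t. (M \<le> t \<longrightarrow> K \<le> W' t) \<and> (t \<le> -M \<longrightarrow> W' t \<le> -K)"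
proof -
  define K' where "K' = max K 1"
  define R where "R = (c * K' + 1) powr (1 / (p - 1))"
  have "1 \<le> K'" "K \<le> K'" "0 \<le> R"
    by (auto simp: K'_def R_def)
  have large: "K' \<le> \<bar>W' t\<bar>" if "R \<le> \<bar>t\<bar>" for t
  proof -
    have "c * K' + 1 = R powr (p - 1)"
      unfolding R_def using p c \<open>1 \<le> K'\<close> by (simp add: powr_powr)
    also have "\<dots> \<le> \<bar>t\<bar> powr (p - 1)"
      using that \<open>0 \<le> R\<close> p by (intro powr_mono2) auto
    finally have "K' \<le> (\<bar>t\<bar> powr (p - 1) - 1) / c"
      using c by (simp add: field_simps)
    then show ?thesis
      using growth[of t] by linarith
  qed
  have large_right: "1 \<le> \<bar>W' t\<bar>" and large_left: "1 \<le> \<bar>- W' (- t)\<bar>" if "R \<le> t" for t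
    using large[of t] large[of "- t"] that \<open>1 \<le> K'\<close> \<open>0 \<le> R\<close> by auto
  have pos: "0 < W' t" if "R \<le> t" for t
    using deriv_pos_at_top[OF deriv cont bounded_below large_right that] .
  have neg: "W' t < 0" if "t \<le> -R" for t
  proof -
    have "((\<lambda>x. W (- x)) has_real_derivative - W' (- x)) (at x)" for x
      using deriv[of "- x"] by (simp add: DERIV_mirror)
    moreover have "continuous_on UNIV (\<lambda>x. - W' (- x))"
      by (intro continuous_intros continuous_on_compose2[OF cont]) auto
    ultimately have "0 < - W' (- (- t))"
      using deriv_pos_at_top[of "\<lambda>x. W (- x)" "\<lambda>x. - W' (- x)" B R "- t"] bounded_below large_left
        that by simp
    then show ?thesis by simp
  qed
  show ?thesis
  proof (intro exI[of _ R] conjI allI impI \<open>0 \<le> R\<close>)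
    fix t
    show "K \<le> W' t" if "R \<le> t"
      using pos[OF that] large[of t] that \<open>0 \<le> R\<close> \<open>K \<le> K'\<close> by auto
    show "W' t \<le> -K" if "t \<le> -R"
      using neg[OF that] large[of t] that \<open>0 \<le> R\<close> \<open>K \<le> K'\<close> by auto
  qed
qed

lemma truncation_admissible:
  fixes v :: "'a::euclidean_space \<Rightarrow> real"
  assumes s: "0 < s" "s < 1"
    and \<Omega>: "\<Omega> \<in> sets lebesgue" "emeasure lebesgue \<Omega> < \<infinity>"
    and v: "v \<in> borel_measurable lebesgue" "frac_energy s \<Omega> v < \<infinity>"
    and M: "0 \<le> M" and v_outside: "AE x in lebesgue. x \<notin> \<Omega> \<longrightarrow> \<bar>v x\<bar> \<le> M"
    and p: "0 \<le> p"
  shows "(\<lambda>x. truncation M (v x)) \<in> Hs_00 s \<Omega> \<inter> Lp_on p \<Omega>"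
proof
  have [measurable]: "(\<lambda>x. truncation M (v x)) \<in> borel_measurable lebesgue"
    using v(1) by measurable
  show "(\<lambda>x. truncation M (v x)) \<in> Hs_00 s \<Omega>"
  proof (rule Hs_00_of_contraction[OF s \<Omega> v _ abs_truncation_le_1])
    show "AE x in lebesgue. x \<notin> \<Omega> \<longrightarrow> truncation M (v x) = 0"
      using v_outside by eventually_elim (simp add: truncation_eq_0_iff M)
  qed (simp_all add: truncation_contraction M)
  show "(\<lambda>x. truncation M (v x)) \<in> Lp_on p \<Omega>"
    using p by (intro Lp_on_of_bounded[OF \<Omega> _ abs_truncation_le_1]) simp_all
qed

lemma weak_solution_bounded_in_domain:
  fixes v f :: "'a::euclidean_space \<Rightarrow> real" and W' :: "real \<Rightarrow> real"
  assumes s: "0 < s" "s < 1" and p: "1 \<le> p" and \<epsilon>: "0 < \<epsilon>"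
    and \<Omega>: "\<Omega> \<in> sets lebesgue" "emeasure lebesgue \<Omega> < \<infinity>"
    and W'_growth: "W' \<in> borel_measurable borel" "\<And>t. \<bar>W' t\<bar> \<le> c * (\<bar>t\<bar> powr (p - 1) + 1)"
    and f: "set_borel_measurable lebesgue \<Omega> f" "AE x in lebesgue. x \<in> \<Omega> \<longrightarrow> \<bar>f x\<bar> \<le> F"
    and M: "0 \<le> M" "\<And>t. M \<le> t \<Longrightarrow> K \<le> W' t" "\<And>t. t \<le> -M \<Longrightarrow> W' t \<le> -K"
    and K: "F < \<epsilon> powr (- 2 * s) * K"
    and v_outside: "AE x in lebesgue. x \<notin> \<Omega> \<longrightarrow> \<bar>v x\<bar> \<le> M"
    and v_measurable: "v \<in> borel_measurable lebesgue"
    and sol: "weak_solution s p \<epsilon> W' f \<Omega> v"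
  shows "AE x in lebesgue. x \<in> \<Omega> \<longrightarrow> \<bar>v x\<bar> \<le> M"
proof -
  note [measurable] = \<Omega>(1) W'_growth(1) v_measurable
  define w where "w = (\<lambda>x. truncation M (v x))"
  have [measurable]: "w \<in> borel_measurable lebesgue"
    unfolding w_def by measurable
  have w_bounded: "\<bar>w x\<bar> \<le> 1" for x
    unfolding w_def by (rule abs_truncation_le_1)
  have v: "frac_energy s \<Omega> v < \<infinity>" "v \<in> Lp_on p \<Omega>"
    using sol by (auto simp: weak_solution_def hatH_def)
  have "w \<in> Hs_00 s \<Omega> \<inter> Lp_on p \<Omega>"
    unfolding w_def using p by (intro truncation_admissible[OF s \<Omega> v_measurable v(1) M(1) v_outside]) simp
  then have balance: "frac_form s \<Omega> v w + \<epsilon> powr (- 2 * s) * (\<integral>x. indicator \<Omega> x * (W' (v x) * w x) \<partial>lebesgue)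
      = (\<integral>x. indicator \<Omega> x * (f x * w x) \<partial>lebesgue)"
    using sol unfolding weak_solution_def by blast
  have "0 \<le> frac_form s \<Omega> v w"
    using mono_product_nonneg[OF mono_truncation[OF M(1)]]
    by (intro frac_form_nonneg_of_monotone[OF s]) (simp add: w_def)
  moreover have "integrable lebesgue (\<lambda>x. indicator \<Omega> x * (W' (v x) * w x))"
    by (intro integrable_growth_mult_bounded[OF \<Omega> p v_measurable v(2) W'_growth]) (auto simp: w_bounded)
  moreover have "integrable lebesgue (\<lambda>x. indicator \<Omega> x * (f x * w x))"
  proof (rule integrable_indicator_bounded[OF \<Omega>])
    show "(\<lambda>x. indicator \<Omega> x * (f x * w x)) \<in> borel_measurable lebesgue"
      using f(1) unfolding set_borel_measurable_def by (simp add: mult.assoc[symmetric]) measurable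
    show "AE x in lebesgue. x \<in> \<Omega> \<longrightarrow> \<bar>f x * w x\<bar> \<le> F"
      using f(2)
    proof eventually_elim
      case (elim x)
      then show ?case
        using mult_mono[of "\<bar>f x\<bar>" F "\<bar>w x\<bar>" 1] w_bounded[of x] by (auto simp: abs_mult)
    qed
  qed
  moreover have "integrable lebesgue (\<lambda>x. indicator \<Omega> x * \<bar>w x\<bar>)"
    by (rule integrable_indicator_bounded[OF \<Omega>, where C=1]) (auto simp: w_bounded)
  moreover have "K * (indicator \<Omega> x * \<bar>w x\<bar>) \<le> indicator \<Omega> x * (W' (v x) * w x)" for x
    using truncation_coercive_product[of M K W' "v x"] M by (simp add: w_def indicator_def)
  moreover have "AE x in lebesgue. indicator \<Omega> x * (f x * w x) \<le> F * (indicator \<Omega> x * \<bar>w x\<bar>)"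
    using f(2)
  proof eventually_elim
    case (elim x)
    have "f x * w x \<le> F * \<bar>w x\<bar>" if "x \<in> \<Omega>"
      using elim that abs_ge_self[of "f x * w x"] mult_right_mono[of "\<bar>f x\<bar>" F "\<bar>w x\<bar>"]
      by (simp add: abs_mult)
    then show ?case
      by (auto simp: indicator_def)
  qed
  ultimately have "AE x in lebesgue. indicator \<Omega> x * \<bar>w x\<bar> = 0"
    using balance K by (intro AE_eq_0_of_balance) auto
  then show ?thesis
    by eventually_elim (auto simp: w_def indicator_def truncation_eq_0_iff M(1) split: if_splits)
qed

lemma weak_solution_bounded:
  fixes v f :: "'a::euclidean_space \<Rightarrow> real" and W' :: "real \<Rightarrow> real"
  assumes s: "0 < s" "s < 1" and p: "1 \<le> p" and \<epsilon>: "0 < \<epsilon>"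
    and \<Omega>: "\<Omega> \<in> sets lebesgue" "emeasure lebesgue \<Omega> < \<infinity>"
    and W'_growth: "W' \<in> borel_measurable borel" "\<And>t. \<bar>W' t\<bar> \<le> c * (\<bar>t\<bar> powr (p - 1) + 1)"
    and W'_coercive: "\<And>K. \<exists>M\<ge>0. \<forall>t. (M \<le> t \<longrightarrow> K \<le> W' t) \<and> (t \<le> -M \<longrightarrow> W' t \<le> -K)"
    and f: "f \<in> Linfty_on \<Omega>"
    and v_outside: "AE x in lebesgue. x \<notin> \<Omega> \<longrightarrow> \<bar>v x\<bar> \<le> C"
    and v_measurable: "v \<in> borel_measurable lebesgue"
    and sol: "weak_solution s p \<epsilon> W' f \<Omega> v"
  shows "\<exists>C. AE x in lebesgue. \<bar>v x\<bar> \<le> C"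
proof -
  obtain F where F: "AE x in lebesgue. x \<in> \<Omega> \<longrightarrow> \<bar>f x\<bar> \<le> F"
    and f_measurable: "set_borel_measurable lebesgue \<Omega> f"
    using f by (auto simp: Linfty_on_def)
  define K where "K = \<epsilon> powr (2 * s) * (F + 1)"
  have "\<epsilon> powr (- 2 * s) * \<epsilon> powr (2 * s) = 1"
    using \<epsilon> by (simp add: powr_add[symmetric])
  then have "\<epsilon> powr (- 2 * s) * K = F + 1"
    unfolding K_def by (metis mult.assoc mult_1)
  then have F_lt: "F < \<epsilon> powr (- 2 * s) * K"
    by simp
  obtain M0 where M0: "0 \<le> M0" "\<And>t. M0 \<le> t \<Longrightarrow> K \<le> W' t" "\<And>t. t \<le> -M0 \<Longrightarrow> W' t \<le> -K"
    using W'_coercive[of K] by blast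
  define M where "M = max M0 C"
  have "0 \<le> M" "\<And>t. M \<le> t \<Longrightarrow> K \<le> W' t" "\<And>t. t \<le> -M \<Longrightarrow> W' t \<le> -K"
    using M0 by (auto simp: M_def)
  moreover have v_outside_M: "AE x in lebesgue. x \<notin> \<Omega> \<longrightarrow> \<bar>v x\<bar> \<le> M"
    using v_outside by eventually_elim (auto simp: M_def)
  ultimately have "AE x in lebesgue. x \<in> \<Omega> \<longrightarrow> \<bar>v x\<bar> \<le> M"
    by (intro weak_solution_bounded_in_domain[OF s p \<epsilon> \<Omega> W'_growth f_measurable F _ _ _ F_lt
          v_outside_M v_measurable sol])
  with v_outside_M have "AE x in lebesgue. \<bar>v x\<bar> \<le> M"
    by eventually_elim auto
  then show ?thesis ..
qed

theorem lemma3p7: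
  fixes \<Omega> :: "'a::euclidean_space set"
    and W W' W'' :: "real \<Rightarrow> real"
    and s p c\<^sub>W \<epsilon> :: real
    and g v f :: "'a \<Rightarrow> real"
  assumes dim: "DIM('a) \<ge> 2"
    and s: "0 < s" "s < 1/2"
    and W_deriv: "\<And>t. (W has_real_derivative W' t) (at t)"
    and W'_deriv: "\<And>t. (W' has_real_derivative W'' t) (at t)"
    and W''_cont: "continuous_on UNIV W''"
    and W_nonneg: "\<And>t. W t \<ge> 0"
    and W_zeros: "{t. W t = 0} = {-1, 1}"
    and W''_pos: "W'' 1 > 0" "W'' (-1) > 0"
    and p: "1 < p"
    and cW: "c\<^sub>W > 0"
    and W'_growth: "\<And>t. (\<bar>t\<bar> powr (p-1) - 1) / c\<^sub>W \<le> \<bar>W' t\<bar> \<and> \<bar>W' t\<bar> \<le> c\<^sub>W * (\<bar>t\<bar> powr (p-1) + 1)"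
    and \<Omega>: "open \<Omega>" "bounded \<Omega>" "lipschitz_boundary \<Omega>"
    and \<epsilon>: "\<epsilon> > 0"
    and g: "loc_lipschitz g" "\<exists>C. AE x in lebesgue. \<bar>g x\<bar> \<le> C"
    and f: "f \<in> Linfty_on \<Omega>"
    and v: "v \<in> Hs_g s \<Omega> g" "v \<in> Lp_on p \<Omega>"
    and sol: "weak_solution s p \<epsilon> W' f \<Omega> v"
  shows "v \<in> borel_measurable lebesgue \<and> (\<exists>C. AE x in lebesgue. \<bar>v x\<bar> \<le> C)"
proof -
  have v_measurable: "v \<in> borel_measurable lebesgue"
    using v(1) by (simp add: Hs_g_def hatH_def L2_loc_def)
  obtain Cg where "AE x in lebesgue. \<bar>g x\<bar> \<le> Cg"
    using g(2) by blast
  moreover have "AE x in lebesgue. x \<notin> \<Omega> \<longrightarrow> v x = g x"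
    using v(1) by (simp add: Hs_g_def)
  ultimately have "AE x in lebesgue. x \<notin> \<Omega> \<longrightarrow> \<bar>v x\<bar> \<le> Cg"
    by eventually_elim auto
  moreover have W'_continuous: "continuous_on UNIV W'"
    using W'_deriv by (meson DERIV_isCont continuous_at_imp_continuous_on)
  moreover have "\<exists>M\<ge>0. \<forall>t. (M \<le> t \<longrightarrow> K \<le> W' t) \<and> (t \<le> -M \<longrightarrow> W' t \<le> -K)" for K
    using deriv_coercive_of_growth[OF W_deriv W'_continuous W_nonneg p cW] W'_growth by blast
  moreover have "\<Omega> \<in> sets lebesgue" "emeasure lebesgue \<Omega> < \<infinity>"
    using lmeasurable_open[OF \<Omega>(2,1)] by (auto simp: fmeasurable_def)
  ultimately have "\<exists>C. AE x in lebesgue. \<bar>v x\<bar> \<le> C"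
    using s p \<epsilon> W'_growth f v_measurable sol
    by (intro weak_solution_bounded[where c = c\<^sub>W])
      (auto intro: borel_measurable_continuous_onI)
  with v_measurable show ?thesis ..
qed

end
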